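(* Let $q,r\ge 0$, let $f:\mathbb{R}\to\mathbb{R}$ be $(q,r)$-continuous at every point of $\mathbb{R}$, and let $C\subseteq\mathbb{R}$ be $q$-connected. Then $f(C)$ is $r$-connected.
   Context: For $A\subseteq\mathbb{R}$ and $c\in\mathbb{R}$, $\mathrm{dist}(c,A)=\mathrm{dist}(A,c)=\inf\{|a-c| : a\in A\}$. For $r\ge0$, a set $C\subseteq\mathbb{R}$ is $r$-disconnected if $C=A\cup B$ for some nonempty sets $A,B$ such that $\mathrm{dist}(a,B)>r$ for every $a\in A$ and $\mathrm{dist}(A,b)>r$ for every $b\in B$; $C$ is $r$-connected if it is not $r$-disconnected. A function $f:\mathbb{R}\to\mathbb{R}$ is $(q,r)$-continuous at $a$ if for every $\varepsilon>0$ there is $\delta>0$ such that $|x-a|<q+\delta$ implies $|f(x)-f(a)|<r+\varepsilon$. *)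

theory Defs
  imports "HOL-Analysis.Analysis"
begin

definition pdist :: "real \<Rightarrow> real set \<Rightarrow> real" where
  "pdist c A = Inf {\<bar>a - c\<bar> | a. a \<in> A}"

definition r_disconnected :: "real \<Rightarrow> real set \<Rightarrow> bool" where
  "r_disconnected r C \<longleftrightarrow> (\<exists>A B. C = A \<union> B \<and> A \<noteq> {} \<and> B \<noteq> {} \<and>
      (\<forall>a\<in>A. pdist a B > r) \<and> (\<forall>b\<in>B. pdist b A > r))"

definition r_connected :: "real \<Rightarrow> real set \<Rightarrow> bool" where
  "r_connected r C \<longleftrightarrow> \<not> r_disconnected r C"

definition qr_continuous_at :: "real \<Rightarrow> real \<Rightarrow> (real \<Rightarrow> real) \<Rightarrow> real \<Rightarrow> bool" where
  "qr_continuous_at q r f a \<longleftrightarrow> (\<forall>\<epsilon>>0. \<exists>\<delta>>0. \<forall>x. \<bar>x - a\<bar> < q + \<delta> \<longrightarrow> \<bar>f x - f a\<bar> < r + \<epsilon>)"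

end

theory Submission
  imports Defs
begin

(* We prove the contrapositive: an r-disconnection A, B of f(C)
   pulls back to the q-disconnection C1 = C \<inter> f-1(A), C2 = C \<inter> f-1(B) of C.
   The key estimate (pdist_image_le) says that (q,r)-continuity at c sends
   "c is within q of S" to "f c is within r of f(S)".  Applied contrapositively
   (preimage_far) it shows that points of C1 are more than q away from C2 and
   vice versa, since f maps them into the r-separated pieces A and B. *)

lemma pdist_lower:
  assumes "x \<in> S" shows "pdist c S \<le> \<bar>x - c\<bar>"
  unfolding pdist_def
  by (rule cInf_lower) (use assms in \<open>auto intro!: bdd_belowI[where m=0]\<close>)

lemma pdist_less_witness:
  assumes "S \<noteq> {}" "pdist c S < t" shows "\<exists>x\<in>S. \<bar>x - c\<bar> < t"
proof -
  have "{\<bar>a - c\<bar> | a. a \<in> S} \<noteq> {}" using assms(1) by auto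
  from cInf_lessD[OF this] assms(2) show ?thesis unfolding pdist_def by auto
qed

lemma pdist_image_le:
  assumes cont: "qr_continuous_at q r f c" and S: "S \<noteq> {}" and close: "pdist c S \<le> q"
    and image: "f ` S \<subseteq> B"
  shows "pdist (f c) B \<le> r"
proof (rule field_le_epsilon)
  fix e :: real assume "e > 0"
  then obtain \<delta> where "\<delta> > 0" and \<delta>: "\<And>x. \<bar>x - c\<bar> < q + \<delta> \<Longrightarrow> \<bar>f x - f c\<bar> < r + e"
    using cont unfolding qr_continuous_at_def by blast
  have "pdist c S < q + \<delta>" using close \<open>\<delta> > 0\<close> by linarith
  then obtain x where "x \<in> S" and x_close: "\<bar>x - c\<bar> < q + \<delta>"
    using pdist_less_witness[OF S] by blast
  then have "f x \<in> B" using image by blast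
  then have "pdist (f c) B \<le> \<bar>f x - f c\<bar>" by (rule pdist_lower)
  also have "\<dots> < r + e" using \<delta>[OF x_close] .
  finally show "pdist (f c) B \<le> r + e" by simp
qed

lemma preimage_far:
  assumes cont: "\<forall>a. qr_continuous_at q r f a"
    and far: "\<forall>a\<in>A. pdist a B > r"
    and S1: "f ` S1 \<subseteq> A" and S2: "f ` S2 \<subseteq> B" "S2 \<noteq> {}"
  shows "\<forall>c\<in>S1. pdist c S2 > q"
proof
  fix c assume "c \<in> S1"
  then have "pdist (f c) B > r" using far S1 by blast
  show "pdist c S2 > q"
  proof (rule ccontr)
    assume "\<not> pdist c S2 > q"
    then have "pdist (f c) B \<le> r"
      by (intro pdist_image_le[OF cont[rule_format] S2(2) _ S2(1)]) simp
    with \<open>pdist (f c) B > r\<close> show False by simp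
  qed
qed

lemma preimage_nonempty:
  assumes "A \<subseteq> f ` C" "A \<noteq> {}" shows "{c\<in>C. f c \<in> A} \<noteq> {}"
proof -
  obtain y where "y \<in> A" using assms(2) by blast
  then obtain c where "c \<in> C" "f c = y" using assms(1) by blast
  then show ?thesis using \<open>y \<in> A\<close> by blast
qed

lemma r_disconnected_preimage:
  assumes cont: "\<forall>a. qr_continuous_at q r f a" and "r_disconnected r (f ` C)"
  shows "r_disconnected q C"
proof -
  obtain A B where split: "f ` C = A \<union> B" and "A \<noteq> {}" "B \<noteq> {}"
    and farA: "\<forall>a\<in>A. pdist a B > r" and farB: "\<forall>b\<in>B. pdist b A > r"
    using assms(2) unfolding r_disconnected_def by blast
  define C1 where "C1 = {c\<in>C. f c \<in> A}"
  define C2 where "C2 = {c\<in>C. f c \<in> B}"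
  have cover: "C = C1 \<union> C2" using split unfolding C1_def C2_def by auto
  have ne1: "C1 \<noteq> {}" using preimage_nonempty[of A f C] split \<open>A \<noteq> {}\<close>
    unfolding C1_def by blast
  have ne2: "C2 \<noteq> {}" using preimage_nonempty[of B f C] split \<open>B \<noteq> {}\<close>
    unfolding C2_def by blast
  have img1: "f ` C1 \<subseteq> A" and img2: "f ` C2 \<subseteq> B" unfolding C1_def C2_def by auto
  have "\<forall>c\<in>C1. pdist c C2 > q" using preimage_far[OF cont farA img1 img2 ne2] .
  moreover have "\<forall>c\<in>C2. pdist c C1 > q" using preimage_far[OF cont farB img2 img1 ne1] .
  ultimately show ?thesis
    unfolding r_disconnected_def using cover ne1 ne2 by blast
qed

theorem theorem6:
  fixes q r :: real and f :: "real \<Rightarrow> real" and C :: "real set"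
  assumes "q \<ge> 0" and "r \<ge> 0"
    and "\<forall>a. qr_continuous_at q r f a"
    and "r_connected q C"
  shows "r_connected r (f ` C)"
  using r_disconnected_preimage[OF assms(3)] assms(4)
  unfolding r_connected_def by blast

end
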